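(* (Euler Formula.) Let $A$ be a $q\times q$ complex matrix, $h$ a generalized polynomial with variable coefficients, $f:\mathbb{R}\to\mathbb{C}^q$ continuous and $y_0\in\mathbb{C}^q$. Then the unique continuous differentiable $y:\mathbb{R}\to\mathbb{C}^q$ satisfying $$y'(t)+h(t,A)\,y(t)=f(t),\qquad y(0)=y_0$$ is $$y(t)=\exp\!\left(\int_t^0h(u,A)\,du\right)y_0+\int_0^t\exp\!\left(\int_t^v h(u,A)\,du\right)f(v)\,dv.$$
   Context: A generalized polynomial is a family $g=(g_a)_{a\in\mathbb{C}}$ with $g_a=\sum_{n\ge0}g_{a,n}(X-a)^n\in\mathbb{C}[[X-a]]$, operations componentwise, a complex polynomial being identified with the family of its Taylor expansions at all points. For every generalized polynomial $g$ and nonconstant polynomial $D$ there is a unique polynomial $R$ of degree $<\deg D$ with $g=Dq+R$ for a generalized polynomial $q$; for a square matrix $A$ one defines $g(A):=R(A)$ where $D$ is any nonconstant polynomial annihilating $A$ (this does not depend on $D$). A generalized polynomial with variable coefficients is a family $h=(h_a)_{a\in\mathbb{C}}$ with $h_a=\sum_{n\ge0}h_{a,n}(t)(X-a)^n$, each $h_{a,n}:\mathbb{R}\to\mathbb{C}$ being $C^\infty$; $h(t,A)$ is the evaluation at $A$ of the generalized polynomial obtained by fixing $t$. $\exp$ is the usual matrix exponential. *)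

theory Defs
  imports "HOL-Analysis.Analysis" "HOL-Computational_Algebra.Polynomial_FPS"
begin

text \<open>A generalized polynomial: a family of formal power series, the series at a
  being read as a power series in (X - a).\<close>
type_synonym gpoly = "complex \<Rightarrow> complex fps"

definition taylor :: "complex poly \<Rightarrow> gpoly" where
  "taylor p = (\<lambda>a. fps_of_poly (p \<circ>\<^sub>p [:a, 1:]))"

definition mpow :: "complex^'q^'q \<Rightarrow> nat \<Rightarrow> complex^'q^'q" where
  "mpow A k = (((**) A) ^^ k) (mat 1)"

definition peval_mat :: "complex poly \<Rightarrow> complex^'q^'q \<Rightarrow> complex^'q^'q" where
  "peval_mat p A = (\<Sum>i\<le>degree p. mat (coeff p i) ** mpow A i)"

definition gp_rem :: "gpoly \<Rightarrow> complex poly \<Rightarrow> complex poly" where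
  "gp_rem g D = (THE R. degree R < degree D \<and>
      (\<exists>q::gpoly. \<forall>a. g a = taylor D a * q a + taylor R a))"

definition gp_eval :: "gpoly \<Rightarrow> complex^'q^'q \<Rightarrow> complex^'q^'q" where
  "gp_eval g A = (let D = (SOME D. 0 < degree D \<and> peval_mat D A = 0)
                  in peval_mat (gp_rem g D) A)"

type_synonym vgpoly = "real \<Rightarrow> gpoly"

definition vgp_eval :: "vgpoly \<Rightarrow> real \<Rightarrow> complex^'q^'q \<Rightarrow> complex^'q^'q" where
  "vgp_eval h t A = gp_eval (h t) A"

definition smooth_fun :: "(real \<Rightarrow> complex) \<Rightarrow> bool" where
  "smooth_fun f \<longleftrightarrow> (\<exists>F. F 0 = f \<and>
      (\<forall>k t. (F k has_vector_derivative F (Suc k) t) (at t)))"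

definition mexp :: "complex^'q^'q \<Rightarrow> complex^'q^'q" where
  "mexp M = (\<Sum>k. (1 / fact k) *\<^sub>R mpow M k)"

definition oint :: "real \<Rightarrow> real \<Rightarrow> (real \<Rightarrow> 'b::euclidean_space) \<Rightarrow> 'b" where
  "oint a b f = (if a \<le> b then integral {a..b} f else - integral {b..a} f)"

end

theory Submission
  imports Defs "HOL-Computational_Algebra.Fundamental_Theorem_Algebra"
begin

(* The values h(t,A) are all polynomials in A, so they commute with one another and with their
   integrals.  Dividing by an annihilating polynomial D of A shows that h(t,A) depends linearly on
   the finitely many Taylor coefficients of h(t) of order < deg D at the roots of D; hence it is
   continuous in t.  For a continuous matrix function H with commuting values, the integrating
   factor exp(int_0^t H) has derivative exp(int_0^t H) H(t), so y' + H y = f is equivalent to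
   (exp(int_0^t H) y)' = exp(int_0^t H) f, which yields both the solution formula and uniqueness.
   Of the smoothness of the coefficients of h only their continuity is needed. *)

section \<open>Division with remainder of generalized polynomials\<close>

lemma taylor_mult: "taylor (p * q) a = taylor p a * taylor q a"
  by (simp add: taylor_def pcompose_mult fps_of_poly_mult)

lemma taylor_add: "taylor (p + q) a = taylor p a + taylor q a"
  by (simp add: taylor_def pcompose_add fps_of_poly_add)

lemma taylor_diff: "taylor (p - q) a = taylor p a - taylor q a"
  by (simp add: taylor_def pcompose_diff fps_of_poly_diff)

lemma taylor_smult: "taylor (smult c p) a = fps_const c * taylor p a"
  by (simp add: taylor_def pcompose_smult fps_of_poly_smult)

lemma taylor_sum: "taylor (sum f S) a = (\<Sum>i\<in>S. taylor (f i) a)"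
  by (simp add: taylor_def pcompose_sum fps_of_poly_sum)

lemma taylor_0 [simp]: "taylor 0 a = 0"
  by (simp add: taylor_def)

lemma taylor_eq_0_iff [simp]: "taylor p a = 0 \<longleftrightarrow> p = 0"
  by (simp add: taylor_def pcompose_eq_0_iff)

lemma fps_nth_taylor_0: "fps_nth (taylor p a) 0 = poly p a"
  by (simp add: taylor_def poly_pcompose poly_0_coeff_0[symmetric])

lemma fps_nth_taylor_degree: "p \<noteq> 0 \<Longrightarrow> fps_nth (taylor p a) (degree p) \<noteq> 0"
  using lead_coeff_comp[of "[:a, 1:]" p] by (simp add: taylor_def degree_pcompose)

lemma taylor_linear_factor: "taylor [:-c, 1:] c = fps_X"
  by (simp add: taylor_def pcompose_pCons fps_of_poly_pCons)

lemma is_unit_taylor: "poly p a \<noteq> 0 \<Longrightarrow> is_unit (taylor p a)"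
  by (simp add: fps_nth_taylor_0)

lemma fps_X_dvd_iff: "fps_X dvd f \<longleftrightarrow> fps_nth (f :: 'a::field fps) 0 = 0"
proof
  assume "fps_nth f 0 = 0"
  then have "f = fps_X * fps_shift 1 f"
    using fps_conv_fps_X_power_mult_fps_shift[of f 1] subdegree_eq_0_iff by fastforce
  then show "fps_X dvd f" by (metis dvd_triv_left)
qed (auto simp: dvd_def)

lemma taylor_dvd_if_jet_vanishes:
  assumes "0 < degree D"
    and jet: "\<And>n. poly D a = 0 \<Longrightarrow> n < degree D \<Longrightarrow> fps_nth u n = 0"
  shows "taylor D a dvd u"
proof (cases "poly D a = 0 \<and> u \<noteq> 0")
  case True
  have "D \<noteq> 0" using assms(1) by auto
  then have "subdegree (taylor D a) \<le> degree D"
    by (intro subdegree_leI fps_nth_taylor_degree)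
  also have "degree D \<le> subdegree u"
    using True jet by (intro subdegree_geI) auto
  finally show ?thesis
    using True \<open>D \<noteq> 0\<close> by (subst fps_dvd_iff) auto
next
  case False
  then show ?thesis by (auto intro: unit_imp_dvd is_unit_taylor)
qed

definition is_gp_rem :: "gpoly \<Rightarrow> complex poly \<Rightarrow> complex poly \<Rightarrow> bool" where
  "is_gp_rem g D R \<longleftrightarrow> degree R < degree D \<and> (\<forall>a. taylor D a dvd g a - taylor R a)"

lemma gp_remainder_exists:
  "(D :: complex poly) \<noteq> 0 \<Longrightarrow>
     \<exists>R. (R = 0 \<or> degree R < degree D) \<and> (\<forall>a. taylor D a dvd g a - taylor R a)"
proof (induction "degree D" arbitrary: D g rule: less_induct)
  case less
  show ?case
  proof (cases "degree D = 0")
    case True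
    then obtain k where "D = [:k:]" by (meson degree_eq_zeroE)
    with less.prems have "is_unit (taylor D a)" for a by (intro is_unit_taylor) simp
    then show ?thesis by (intro exI[of _ 0]) (auto intro: unit_imp_dvd)
  next
    case False
    then obtain c where "poly D c = 0"
      by (metis fundamental_theorem_of_algebra constant_degree)
    then obtain D' where D: "D = D' * [:-c, 1:]"
      by (metis mult.commute poly_eq_0_iff_dvd dvdE)
    with less.prems have "D' \<noteq> 0" by auto
    then have deg_D: "degree D = Suc (degree D')"
      unfolding D by (subst degree_mult_eq) simp_all
    obtain R' where R': "R' = 0 \<or> degree R' < degree D'"
      and "\<forall>a. taylor D' a dvd g a - taylor R' a"
      using less.hyps[of D' g] deg_D \<open>D' \<noteq> 0\<close> by auto
    then obtain q where q: "\<And>a. g a - taylor R' a = taylor D' a * q a"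
      unfolding dvd_def by metis
    define r where "r = fps_nth (q c) 0"
    define R where "R = smult r D' + R'"
    have "degree R \<le> degree D'"
      unfolding R_def using R' degree_add_le degree_smult_le
      by (metis degree_0 le0 less_imp_le)
    then have "degree R < degree D" using deg_D by simp
    moreover have "taylor D a dvd g a - taylor R a" for a
    proof -
      have "taylor [:-c, 1:] a dvd q a - fps_const r"
        by (rule taylor_dvd_if_jet_vanishes) (auto simp: r_def)
      then have "taylor D' a * taylor [:-c, 1:] a dvd taylor D' a * (q a - fps_const r)"
        by (rule mult_dvd_mono[OF dvd_refl])
      moreover have "g a - taylor R a = taylor D' a * (q a - fps_const r)"
        using q[of a] by (simp add: R_def taylor_add taylor_smult algebra_simps)
      ultimately show ?thesis unfolding D taylor_mult by simp
    qed
    ultimately show ?thesis by blast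
  qed
qed

lemma is_gp_rem_exists: "0 < degree D \<Longrightarrow> \<exists>R. is_gp_rem g D R"
  using gp_remainder_exists[of D g] unfolding is_gp_rem_def by (metis degree_0 gr_implies_not0)

lemma taylor_dvd_taylor_imp_dvd:
  "(\<And>a. taylor D a dvd taylor P a) \<Longrightarrow> (D :: complex poly) dvd P"
proof (induction "degree D" arbitrary: D P rule: less_induct)
  case less
  show ?case
  proof (cases "degree D = 0")
    case True
    then obtain k where D: "D = [:k:]" by (meson degree_eq_zeroE)
    show ?thesis
    proof (cases "k = 0")
      case True
      then have "P = 0" using less.prems[of 0] D by simp
      then show ?thesis by simp
    qed (simp add: D const_poly_dvd_iff dvd_field_iff)
  next
    case False
    then obtain c where "poly D c = 0"
      by (metis fundamental_theorem_of_algebra constant_degree)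
    then obtain D' where D: "D = [:-c, 1:] * D'"
      using poly_eq_0_iff_dvd by blast
    with False have "D' \<noteq> 0" by auto
    then have deg_D: "degree D = Suc (degree D')"
      unfolding D by (subst degree_mult_eq) simp_all
    have "fps_X dvd taylor P c"
      using less.prems[of c] unfolding D taylor_mult taylor_linear_factor by (rule dvd_mult_left)
    then have "poly P c = 0" by (simp add: fps_X_dvd_iff fps_nth_taylor_0)
    then obtain P' where P: "P = [:-c, 1:] * P'"
      using poly_eq_0_iff_dvd by blast
    have "taylor D' a dvd taylor P' a" for a
      using less.prems[of a] unfolding D P taylor_mult by simp
    then have "D' dvd P'" using less.hyps deg_D by simp
    then show ?thesis unfolding D P by (rule mult_dvd_mono[OF dvd_refl])
  qed
qed

lemma is_gp_rem_unique:
  assumes "is_gp_rem g D R1" "is_gp_rem g D R2"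
  shows "R1 = R2"
proof (rule ccontr)
  assume "R1 \<noteq> R2"
  have "taylor D a dvd taylor (R2 - R1) a" for a
    using dvd_diff[of "taylor D a" "g a - taylor R1 a" "g a - taylor R2 a"] assms
    by (simp add: is_gp_rem_def taylor_diff)
  then have "degree D \<le> degree (R2 - R1)"
    using \<open>R1 \<noteq> R2\<close> by (intro dvd_imp_degree_le taylor_dvd_taylor_imp_dvd) auto
  moreover have "degree (R2 - R1) < degree D"
    using assms unfolding is_gp_rem_def by (meson degree_diff_le_max max_less_iff_conj le_less_trans)
  ultimately show False by simp
qed

lemma gp_rem_eqI:
  assumes "is_gp_rem g D R"
  shows "gp_rem g D = R"
proof -
  have "degree R < degree D \<and> (\<exists>q::gpoly. \<forall>a. g a = taylor D a * q a + taylor R a)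
        \<longleftrightarrow> is_gp_rem g D R" for R
    by (simp add: is_gp_rem_def dvd_def diff_eq_eq choice_iff)
  then show ?thesis
    unfolding gp_rem_def using assms is_gp_rem_unique by (intro the_equality) auto
qed

lemma is_gp_rem_gp_rem: "0 < degree D \<Longrightarrow> is_gp_rem g D (gp_rem g D)"
  using is_gp_rem_exists gp_rem_eqI by metis

lemma is_gp_rem_jet_cong:
  assumes rem: "is_gp_rem g D R"
    and jet: "\<And>a n. poly D a = 0 \<Longrightarrow> n < degree D \<Longrightarrow> fps_nth (g' a) n = fps_nth (g a) n"
  shows "is_gp_rem g' D R"
  unfolding is_gp_rem_def
proof (intro conjI allI)
  show "degree R < degree D" using rem by (simp add: is_gp_rem_def)
  fix a
  have "taylor D a dvd g' a - g a"
    using \<open>degree R < degree D\<close> jet by (intro taylor_dvd_if_jet_vanishes) auto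
  moreover have "taylor D a dvd g a - taylor R a" using rem by (simp add: is_gp_rem_def)
  ultimately show "taylor D a dvd g' a - taylor R a"
    using dvd_add by fastforce
qed

lemma is_gp_rem_sum:
  assumes "finite K" "0 < degree D" "\<And>k. k \<in> K \<Longrightarrow> is_gp_rem (e k) D (R k)"
  shows "is_gp_rem (\<lambda>a. \<Sum>k\<in>K. fps_const (c k) * e k a) D (\<Sum>k\<in>K. smult (c k) (R k))"
  unfolding is_gp_rem_def
proof (intro conjI allI)
  show "degree (\<Sum>k\<in>K. smult (c k) (R k)) < degree D"
    using assms by (intro degree_sum_less) (auto simp: is_gp_rem_def intro: le_less_trans degree_smult_le)
  fix a
  have "(\<Sum>k\<in>K. fps_const (c k) * e k a) - taylor (\<Sum>k\<in>K. smult (c k) (R k)) a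
        = (\<Sum>k\<in>K. fps_const (c k) * (e k a - taylor (R k) a))"
    by (simp add: taylor_sum taylor_smult right_diff_distrib sum_subtractf)
  also have "taylor D a dvd \<dots>"
    using assms(3) by (intro dvd_sum dvd_mult) (auto simp: is_gp_rem_def)
  finally show "taylor D a dvd (\<Sum>k\<in>K. fps_const (c k) * e k a) - taylor (\<Sum>k\<in>K. smult (c k) (R k)) a" .
qed

definition gp_local_monom :: "complex \<Rightarrow> nat \<Rightarrow> gpoly" where
  "gp_local_monom a n = (\<lambda>b. if b = a then fps_X ^ n else 0)"

lemma gp_rem_eq_sum_jet:
  assumes "0 < degree D"
  shows "gp_rem g D = (\<Sum>(a, n) \<in> {a. poly D a = 0} \<times> {..<degree D}.
                          smult (fps_nth (g a) n) (gp_rem (gp_local_monom a n) D))"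
proof -
  define K where "K = {a. poly D a = 0} \<times> {..<degree D}"
  define c where "c = (\<lambda>(a, n). fps_nth (g a) n)"
  define e where "e = (\<lambda>(a, n). gp_local_monom a n)"
  have "D \<noteq> 0" using assms by auto
  then have "finite K" by (simp add: K_def poly_roots_finite)
  have "is_gp_rem (\<lambda>b. \<Sum>k\<in>K. fps_const (c k) * e k b) D (\<Sum>k\<in>K. smult (c k) (gp_rem (e k) D))"
    using \<open>finite K\<close> assms by (intro is_gp_rem_sum is_gp_rem_gp_rem)
  then have "is_gp_rem g D (\<Sum>k\<in>K. smult (c k) (gp_rem (e k) D))"
  proof (rule is_gp_rem_jet_cong)
    fix a n assume "poly D a = 0" "n < degree D"
    then have "(a, n) \<in> K" by (simp add: K_def)
    have "fps_nth (\<Sum>k\<in>K. fps_const (c k) * e k a) n = (\<Sum>k\<in>K. if k = (a, n) then c k else 0)"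
      by (auto simp: fps_sum_nth e_def gp_local_monom_def fps_X_power_nth intro!: sum.cong)
    also have "\<dots> = fps_nth (g a) n"
      using \<open>finite K\<close> \<open>(a, n) \<in> K\<close> by (simp add: c_def)
    finally show "fps_nth (g a) n = fps_nth (\<Sum>k\<in>K. fps_const (c k) * e k a) n" ..
  qed
  then show ?thesis
    unfolding K_def c_def e_def by (simp add: gp_rem_eqI case_prod_beta')
qed

section \<open>Polynomials in a matrix and evaluation of generalized polynomials\<close>

lemma bounded_bilinear_matrix_matrix_mult:
  "bounded_bilinear ((**) :: 'a::{euclidean_space, real_algebra_1}^'n^'m \<Rightarrow> 'a^'k^'n \<Rightarrow> 'a^'k^'m)"
  unfolding bilinear_conv_bounded_bilinear[symmetric] bilinear_def
  by (auto intro!: linearI simp: matrix_matrix_mult_def vec_eq_iff sum.distrib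
      distrib_left distrib_right scaleR_sum_right)

lemma bounded_bilinear_matrix_vector_mult:
  "bounded_bilinear ((*v) :: 'a::{euclidean_space, real_algebra_1}^'n^'m \<Rightarrow> 'a^'n \<Rightarrow> 'a^'m)"
  unfolding bilinear_conv_bounded_bilinear[symmetric] bilinear_def
  by (auto intro!: linearI simp: matrix_vector_mult_add_rdistrib matrix_vector_right_distrib
      matrix_vector_mult_def vec_eq_iff scaleR_sum_right sum.distrib distrib_right)

lemma mat_matrix_mult: "mat c ** M = (\<chi> i j. c * M $ i $ j)"
  unfolding matrix_matrix_mult_def mat_def
  by (auto simp: if_distrib if_distribR sum.delta'[OF finite] cong: if_cong)

lemma matrix_mult_mat: "M ** mat c = (\<chi> i j. M $ i $ j * c)"
  unfolding matrix_matrix_mult_def mat_def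
  by (auto simp: if_distrib if_distribR sum.delta'[OF finite] cong: if_cong)

lemma mat_add: "mat (a + b) = (mat a + mat b :: 'a::monoid_add^'n^'n)"
  by (simp add: mat_def vec_eq_iff)

lemma mat_matrix_mult_commute: "mat c ** M = M ** mat (c :: 'a::comm_semiring_1)"
  by (simp add: mat_matrix_mult matrix_mult_mat mult.commute)

lemma mat_of_real_matrix_mult: "mat (of_real r) ** M = r *\<^sub>R (M :: 'a::real_algebra_1^'n^'m)"
  by (simp add: mat_matrix_mult vec_eq_iff of_real_def)

lemma mpow_Suc: "mpow A (Suc k) = A ** mpow A k"
  by (simp add: mpow_def)

lemma mpow_0: "mpow A 0 = mat 1"
  by (simp add: mpow_def)

lemma peval_mat_eq_sum:
  assumes "degree p \<le> N"
  shows "peval_mat p A = (\<Sum>i\<le>N. mat (coeff p i) ** mpow A i)"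
  unfolding peval_mat_def
  by (rule sum.mono_neutral_left) (use assms in \<open>auto simp: coeff_eq_0\<close>)

lemma peval_mat_add: "peval_mat (p + q) A = peval_mat p A + peval_mat q A"
proof -
  define N where "N = max (degree p) (degree q)"
  have "degree (p + q) \<le> N" "degree p \<le> N" "degree q \<le> N"
    by (auto simp: N_def degree_add_le_max)
  then show ?thesis
    by (simp add: peval_mat_eq_sum bounded_bilinear.add_left[OF bounded_bilinear_matrix_matrix_mult]
        sum.distrib mat_add)
qed

lemma peval_mat_smult: "peval_mat (smult c p) A = mat c ** peval_mat p A"
  using degree_smult_le[of c p]
  by (simp add: peval_mat_eq_sum[of "smult c p" "degree p"] peval_mat_def
      bounded_bilinear.sum_right[OF bounded_bilinear_matrix_matrix_mult] matrix_mul_assoc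
      mat_matrix_mult vec_eq_iff mult.assoc)

lemma peval_mat_sum: "peval_mat (\<Sum>i\<in>S. p i) A = (\<Sum>i\<in>S. peval_mat (p i) A)"
  by (induction S rule: infinite_finite_induct) (simp_all add: peval_mat_add peval_mat_def[of 0])

lemma matrix_mult_peval_mat_commute:
  assumes "M ** A = A ** M"
  shows "M ** peval_mat p A = peval_mat p A ** M"
proof -
  have mpow: "M ** mpow A k = mpow A k ** M" for k
  proof (induction k)
    case (Suc k)
    then show ?case by (metis mpow_Suc matrix_mul_assoc assms)
  qed (simp add: mpow_0)
  show ?thesis
    unfolding peval_mat_def
      bounded_bilinear.sum_right[OF bounded_bilinear_matrix_matrix_mult]
      bounded_bilinear.sum_left[OF bounded_bilinear_matrix_matrix_mult]
    by (intro sum.cong refl)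
      (metis matrix_mul_assoc mat_matrix_mult_commute mpow)
qed

lemma peval_mat_commute: "peval_mat p A ** peval_mat q A = peval_mat q A ** peval_mat p A"
  by (intro matrix_mult_peval_mat_commute matrix_mult_peval_mat_commute[symmetric] refl)

lemma exists_nontrivial_linear_relation:
  fixes v :: "nat \<Rightarrow> 'a::euclidean_space"
  assumes "DIM('a) \<le> N"
  obtains c where "\<exists>i\<le>N. c i \<noteq> 0" "(\<Sum>i\<le>N. c i *\<^sub>R v i) = 0"
proof (cases "inj_on v {..N}")
  case True
  then have "card (v ` {..N}) = Suc N" by (simp add: card_image)
  with assms have "dependent (v ` {..N})" by (intro dependent_biggerset) simp
  then obtain u where "\<exists>w\<in>v ` {..N}. u w \<noteq> 0" "(\<Sum>w\<in>v ` {..N}. u w *\<^sub>R w) = 0"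
    using dependent_finite by blast
  with True show ?thesis
    by (intro that[of "u \<circ> v"]) (auto simp: sum.reindex)
next
  case False
  then obtain i j where "i \<le> N" "j \<le> N" "i \<noteq> j" "v i = v j"
    by (auto simp: inj_on_def)
  have delta: "(\<Sum>k\<le>N. of_bool (k = l) *\<^sub>R v k) = v l" if "l \<le> N" for l
    using that by (simp add: of_bool_def if_distrib if_distribR sum.delta' cong del: if_weak_cong)
  show ?thesis
  proof (rule that[of "\<lambda>k. of_bool (k = i) - of_bool (k = j)"])
    show "\<exists>k\<le>N. of_bool (k = i) - of_bool (k = j) \<noteq> (0::real)"
      using \<open>i \<le> N\<close> \<open>i \<noteq> j\<close> by auto
    show "(\<Sum>k\<le>N. (of_bool (k = i) - of_bool (k = j)) *\<^sub>R v k) = 0"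
      using delta[OF \<open>i \<le> N\<close>] delta[OF \<open>j \<le> N\<close>] \<open>v i = v j\<close>
      by (simp add: scaleR_left_diff_distrib sum_subtractf)
  qed
qed

lemma exists_annihilating_poly: "\<exists>D. 0 < degree D \<and> peval_mat D (A :: complex^'n^'n) = 0"
proof -
  define N where "N = DIM(complex^'n^'n)"
  obtain c where c: "\<exists>i\<le>N. c i \<noteq> 0" "(\<Sum>i\<le>N. c i *\<^sub>R mpow A i) = 0"
    using exists_nontrivial_linear_relation[of N "mpow A"] by (auto simp: N_def)
  define D where "D = (\<Sum>i\<le>N. monom (complex_of_real (c i)) i)"
  have coeff_D: "coeff D i = (if i \<le> N then of_real (c i) else 0)" for i
    by (simp add: D_def coeff_sum coeff_monom)
  have "degree D \<le> N"
    by (auto intro: degree_le simp: coeff_D)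
  then have "peval_mat D A = (\<Sum>i\<le>N. c i *\<^sub>R mpow A i)"
    by (simp add: peval_mat_eq_sum coeff_D mat_of_real_matrix_mult)
  also have "\<dots> = 0" by (fact c(2))
  finally have annih: "peval_mat D A = 0" .
  moreover have "0 < degree D"
  proof (rule ccontr)
    assume "\<not> 0 < degree D"
    then have "degree D = 0" by simp
    then have "peval_mat D A = mat (coeff D 0)"
      by (simp add: peval_mat_def mpow_0)
    then have "coeff D 0 = mat (coeff D 0) $ i $ i" for i :: 'n
      by (simp add: mat_def)
    with annih \<open>peval_mat D A = mat (coeff D 0)\<close> have "lead_coeff D = 0"
      by (simp add: \<open>degree D = 0\<close>)
    then have "D = 0" by simp
    obtain i where "i \<le> N" "c i \<noteq> 0" using c(1) by blast
    then have "coeff D i \<noteq> 0" by (simp add: coeff_D)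
    with \<open>D = 0\<close> show False by simp
  qed
  ultimately show ?thesis by blast
qed

definition annihilating_poly :: "complex^'n^'n \<Rightarrow> complex poly" where
  "annihilating_poly A = (SOME D. 0 < degree D \<and> peval_mat D A = 0)"

lemma degree_annihilating_poly: "0 < degree (annihilating_poly A)"
  unfolding annihilating_poly_def by (rule someI2_ex[OF exists_annihilating_poly]) simp

lemma gp_eval_eq_sum_jet:
  fixes A :: "complex^'n^'n"
  defines "D \<equiv> annihilating_poly A"
  shows "gp_eval g A = (\<Sum>(a, n)\<in>{a. poly D a = 0} \<times> {..<degree D}.
                          mat (fps_nth (g a) n) ** gp_eval (gp_local_monom a n) A)"
proof -
  have gp_eval: "gp_eval g' A = peval_mat (gp_rem g' D) A" for g'
    by (simp add: gp_eval_def D_def annihilating_poly_def)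
  show ?thesis
    unfolding gp_eval gp_rem_eq_sum_jet[OF degree_annihilating_poly[of A, folded D_def], of g]
    by (simp add: peval_mat_sum peval_mat_smult case_prod_beta)
qed

lemma gp_eval_commute: "gp_eval g A ** gp_eval g' A = gp_eval g' A ** gp_eval g A"
  unfolding gp_eval_def Let_def by (rule peval_mat_commute)

lemma smooth_fun_imp_continuous:
  assumes "smooth_fun f"
  shows "continuous_on UNIV f"
proof -
  obtain F where "F 0 = f" "\<And>k t. (F k has_vector_derivative F (Suc k) t) (at t)"
    using assms unfolding smooth_fun_def by blast
  then show ?thesis
    by (metis continuous_at_imp_continuous_on has_vector_derivative_continuous)
qed

lemma continuous_on_vgp_eval:
  assumes "\<And>a n. continuous_on UNIV (\<lambda>t. fps_nth (h t a) n)"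
  shows "continuous_on UNIV (\<lambda>t. vgp_eval h t A)"
proof -
  have expansion: "vgp_eval h t A = (\<Sum>(a, n)\<in>{a. poly (annihilating_poly A) a = 0} \<times> {..<degree (annihilating_poly A)}.
          mat (fps_nth (h t a) n) ** gp_eval (gp_local_monom a n) A)" for t
    unfolding vgp_eval_def by (rule gp_eval_eq_sum_jet)
  show ?thesis
    unfolding expansion mat_matrix_mult case_prod_beta
    by (intro continuous_on_sum continuous_on_vec_lambda continuous_on_mult_right assms)
qed

section \<open>The matrix exponential\<close>

text \<open>The bounded operators on a Banach space form a Banach algebra, but \<open>'a \<Rightarrow>\<^sub>L 'a\<close> cannot be
  made a type class instance since \<open>blinfun\<close> has two type parameters; the one-parameter copy
  \<open>'a endo\<close> makes the library's \<open>exp\<close> available.\<close>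

typedef (overloaded) 'a endo = "UNIV :: ('a::{banach, perfect_space} \<Rightarrow>\<^sub>L 'a) set"
  morphisms endo_rep Endo
  by simp

setup_lifting type_definition_endo

instantiation endo :: ("{banach, perfect_space}") real_normed_algebra_1
begin

lift_definition zero_endo :: "'a endo" is 0 .
lift_definition one_endo :: "'a endo" is id_blinfun .
lift_definition plus_endo :: "'a endo \<Rightarrow> 'a endo \<Rightarrow> 'a endo" is "(+)" .
lift_definition minus_endo :: "'a endo \<Rightarrow> 'a endo \<Rightarrow> 'a endo" is "(-)" .
lift_definition uminus_endo :: "'a endo \<Rightarrow> 'a endo" is uminus .
lift_definition times_endo :: "'a endo \<Rightarrow> 'a endo \<Rightarrow> 'a endo" is "(o\<^sub>L)" .
lift_definition scaleR_endo :: "real \<Rightarrow> 'a endo \<Rightarrow> 'a endo" is scaleR .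
lift_definition norm_endo :: "'a endo \<Rightarrow> real" is norm .

definition dist_endo :: "'a endo \<Rightarrow> 'a endo \<Rightarrow> real" where
  "dist_endo a b = norm (a - b)"

definition sgn_endo :: "'a endo \<Rightarrow> 'a endo" where
  "sgn_endo a = inverse (norm a) *\<^sub>R a"

definition uniformity_endo :: "('a endo \<times> 'a endo) filter" where
  "uniformity_endo = (INF e\<in>{0<..}. principal {(x, y). dist x y < e})"

definition open_endo :: "'a endo set \<Rightarrow> bool" where
  "open_endo S = (\<forall>x\<in>S. \<forall>\<^sub>F (x', y) in uniformity. x' = x \<longrightarrow> y \<in> S)"

instance
proof
  fix a b c :: "'a endo" and r s :: real
  show "a + b + c = a + (b + c)" by transfer (rule add.assoc)
  show "a + b = b + a" by transfer (rule add.commute)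
  show "0 + a = a" by transfer simp
  show "- a + a = 0" by transfer simp
  show "a - b = a + - b" by transfer simp
  show "r *\<^sub>R (a + b) = r *\<^sub>R a + r *\<^sub>R b" by transfer (rule scaleR_add_right)
  show "(r + s) *\<^sub>R a = r *\<^sub>R a + s *\<^sub>R a" by transfer (rule scaleR_add_left)
  show "r *\<^sub>R s *\<^sub>R a = (r * s) *\<^sub>R a" by transfer simp
  show "1 *\<^sub>R a = a" by transfer simp
  show "a * b * c = a * (b * c)" by transfer (rule blinfun_eqI, simp)
  show "(a + b) * c = a * c + b * c" by transfer (rule blinfun_eqI, simp add: blinfun.bilinear_simps)
  show "a * (b + c) = a * b + a * c" by transfer (rule blinfun_eqI, simp add: blinfun.bilinear_simps)
  show "r *\<^sub>R a * b = r *\<^sub>R (a * b)" by transfer (rule blinfun_eqI, simp add: blinfun.bilinear_simps)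
  show "a * r *\<^sub>R b = r *\<^sub>R (a * b)" by transfer (rule blinfun_eqI, simp add: blinfun.bilinear_simps)
  show "1 * a = a" by transfer (rule blinfun_eqI, simp)
  show "a * 1 = a" by transfer (rule blinfun_eqI, simp)
  show "(0 :: 'a endo) \<noteq> 1"
  proof transfer
    obtain x :: 'a where "x \<noteq> 0" using UNIV_not_singleton[of 0] by blast
    then show "0 \<noteq> (id_blinfun :: 'a \<Rightarrow>\<^sub>L 'a)" by (metis blinfun_apply_id_blinfun zero_blinfun.rep_eq)
  qed
  show "dist a b = norm (a - b)" by (simp add: dist_endo_def)
  show "sgn a = inverse (norm a) *\<^sub>R a" by (simp add: sgn_endo_def)
  show "(uniformity :: ('a endo \<times> 'a endo) filter) = (INF e\<in>{0<..}. principal {(x, y). dist x y < e})"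
    by (simp add: uniformity_endo_def)
  show "open U = (\<forall>x\<in>U. \<forall>\<^sub>F (x', y) in uniformity. x' = x \<longrightarrow> y \<in> U)" for U :: "'a endo set"
    by (simp add: open_endo_def)
  show "norm a = 0 \<longleftrightarrow> a = 0" by transfer simp
  show "norm (a + b) \<le> norm a + norm b" by transfer (rule norm_triangle_ineq)
  show "norm (r *\<^sub>R a) = \<bar>r\<bar> * norm a" by transfer simp
  show "norm (a * b) \<le> norm a * norm b" by transfer (rule norm_blinfun_compose)
  show "norm (1 :: 'a endo) = 1" by transfer simp
qed

end

instance endo :: ("{banach, perfect_space}") banach
proof
  fix X :: "nat \<Rightarrow> 'a endo"
  assume "Cauchy X"
  then have "Cauchy (\<lambda>n. endo_rep (X n))"
    unfolding Cauchy_def dist_norm by (simp add: norm_endo.rep_eq minus_endo.rep_eq)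
  then obtain L where "(\<lambda>n. endo_rep (X n)) \<longlonglongrightarrow> L"
    using Cauchy_convergent_iff convergent_def by blast
  then have "X \<longlonglongrightarrow> Endo L"
    unfolding tendsto_iff dist_norm by (simp add: norm_endo.rep_eq minus_endo.rep_eq Endo_inverse)
  then show "convergent X" by (auto simp: convergent_def)
qed

lemma norm_exp_sub_one_sub_le:
  fixes x :: "'a::{real_normed_algebra_1, banach}"
  shows "norm (exp x - 1 - x) \<le> norm x ^ 2 * exp (norm x)"
proof -
  have "exp x = (\<Sum>n. x ^ (n + 2) /\<^sub>R fact (n + 2)) + (\<Sum>n<2. x ^ n /\<^sub>R fact n)"
    unfolding exp_def by (rule suminf_split_initial_segment[OF summable_exp_generic])
  then have tail: "exp x - 1 - x = (\<Sum>n. x ^ (n + 2) /\<^sub>R fact (n + 2))"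
    by (simp add: numeral_2_eq_2)
  have "norm (x ^ (n + 2) /\<^sub>R fact (n + 2)) \<le> norm x ^ 2 * (norm x ^ n /\<^sub>R fact n)" for n
  proof -
    have "norm (x ^ (n + 2) /\<^sub>R fact (n + 2)) = norm (x ^ (n + 2)) / fact (n + 2)"
      by (simp add: divide_inverse_commute)
    also have "\<dots> \<le> norm x ^ (n + 2) / fact (n + 2)"
      by (intro divide_right_mono norm_power_ineq) simp
    also have "\<dots> \<le> norm x ^ (n + 2) / fact n"
      by (intro divide_left_mono fact_mono) auto
    also have "\<dots> = norm x ^ 2 * (norm x ^ n /\<^sub>R fact n)"
      by (simp add: power_add divide_inverse ac_simps power2_eq_square)
    finally show ?thesis .
  qed
  then have "norm (exp x - 1 - x) \<le> (\<Sum>n. norm x ^ 2 * (norm x ^ n /\<^sub>R fact n))"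
    unfolding tail by (intro norm_suminf_le summable_mult summable_exp_generic)
  also have "\<dots> = norm x ^ 2 * exp (norm x)"
    unfolding exp_def by (rule suminf_mult[OF summable_exp_generic])
  finally show ?thesis .
qed

lemma exp_has_derivative_at_0:
  "(exp has_derivative (\<lambda>h. h)) (at (0 :: 'a::{real_normed_algebra_1, banach}))"
proof -
  have bound: "norm (norm (exp y - exp 0 - (y - 0)) / norm (y - 0)) \<le> norm y * exp (norm y)"
    if "y \<noteq> 0" for y :: 'a
  proof -
    have "norm (exp y - 1 - y) / norm y \<le> norm y ^ 2 * exp (norm y) / norm y"
      by (intro divide_right_mono norm_exp_sub_one_sub_le) simp
    then show ?thesis
      using that by (simp add: power2_eq_square)
  qed
  have "((\<lambda>y::'a. norm y * exp (norm y)) \<longlongrightarrow> 0) (at 0)"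
    by (auto intro!: tendsto_eq_intros)
  then have "((\<lambda>y::'a. norm (exp y - exp 0 - (y - 0)) / norm (y - 0)) \<longlongrightarrow> 0) (at 0)"
    by (rule Lim_null_comparison[rotated])
      (unfold eventually_at_filter, rule always_eventually, use bound in blast)
  then show ?thesis by (simp add: has_derivative_iff_norm bounded_linear_ident)
qed

lemma has_vector_derivative_exp_commuting:
  fixes X :: "real \<Rightarrow> 'a::{real_normed_algebra_1, banach}"
  assumes X': "(X has_vector_derivative X') (at t)"
    and commute: "\<And>s. X s * X t = X t * X s"
  shows "((\<lambda>s. exp (X s)) has_vector_derivative exp (X t) * X') (at t)"
proof -
  have "((\<lambda>s. X s - X t) has_derivative (\<lambda>h. h *\<^sub>R X')) (at t)"
    using X' by (auto intro!: derivative_eq_intros simp: has_vector_derivative_def)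
  moreover have "(exp has_derivative (\<lambda>h. h)) (at (X t - X t))"
    using exp_has_derivative_at_0 by simp
  ultimately have "((\<lambda>s. exp (X s - X t)) has_vector_derivative X') (at t)"
    unfolding has_vector_derivative_def using diff_chain_at by (fastforce simp: o_def)
  then have "((\<lambda>s. exp (X t) * exp (X s - X t)) has_vector_derivative exp (X t) * X') (at t)"
    by (rule has_vector_derivative_mult_right)
  moreover have "exp (X t) * exp (X s - X t) = exp (X s)" for s
    using exp_add_commuting[of "X t" "X s - X t"] commute[of s]
    by (simp add: algebra_simps)
  ultimately show ?thesis by simp
qed

lemma exp_mult_commute:
  fixes x y :: "'a::{real_normed_algebra_1, banach}"
  assumes "x * y = y * x"
  shows "exp x * y = y * exp x"
proof -
  have "exp x * y = (\<Sum>n. x ^ n /\<^sub>R fact n * y)"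
    unfolding exp_def by (rule suminf_mult2[OF summable_exp_generic])
  also have "\<dots> = (\<Sum>n. y * (x ^ n /\<^sub>R fact n))"
    using power_commuting_commutes[OF assms] by (simp add: scaleR_left_commute)
  also have "\<dots> = y * exp x"
    unfolding exp_def by (rule suminf_mult[OF summable_exp_generic])
  finally show ?thesis .
qed

text \<open>For \<open>complex^'n\<close> the operators in \<open>'a endo\<close> are the real-linear maps, so matrices embed
  injectively but not onto; identities are therefore proved after applying \<open>endo_of_matrix\<close>,
  while \<open>matrix_of_endo\<close> only serves to transport limits back to matrices.\<close>

definition endo_of_matrix :: "complex^'n^'n \<Rightarrow> (complex^'n) endo" where
  "endo_of_matrix M = Endo (Blinfun (\<lambda>v. M *v v))"

definition matrix_of_endo :: "(complex^'n) endo \<Rightarrow> complex^'n^'n" where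
  "matrix_of_endo L = matrix (blinfun_apply (endo_rep L))"

lemma blinfun_apply_endo_of_matrix: "blinfun_apply (endo_rep (endo_of_matrix M)) = (\<lambda>v. M *v v)"
  unfolding endo_of_matrix_def
  using bounded_bilinear.bounded_linear_right[OF bounded_bilinear_matrix_vector_mult]
  by (simp add: Endo_inverse bounded_linear_Blinfun_apply)

lemma matrix_of_endo_of_matrix [simp]: "matrix_of_endo (endo_of_matrix M) = M"
  by (simp add: matrix_of_endo_def blinfun_apply_endo_of_matrix)

lemma endo_of_matrix_inject: "endo_of_matrix M = endo_of_matrix N \<longleftrightarrow> M = N"
  by (metis matrix_of_endo_of_matrix)

lemma endo_eqI: "(\<And>v. blinfun_apply (endo_rep a) v = blinfun_apply (endo_rep b) v) \<Longrightarrow> a = b"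
  by (metis blinfun_eqI endo_rep_inject)

lemma endo_of_matrix_mult: "endo_of_matrix (M ** N) = endo_of_matrix M * endo_of_matrix N"
  by (rule endo_eqI) (simp add: times_endo.rep_eq blinfun_apply_endo_of_matrix matrix_vector_mul_assoc)

lemma endo_of_matrix_one: "endo_of_matrix (mat 1) = 1"
  by (rule endo_eqI) (simp add: one_endo.rep_eq blinfun_apply_endo_of_matrix)

lemma endo_of_matrix_mpow: "endo_of_matrix (mpow M k) = endo_of_matrix M ^ k"
  by (induction k) (simp_all add: mpow_0 mpow_Suc endo_of_matrix_one endo_of_matrix_mult)

lemma endo_of_matrix_add: "endo_of_matrix (M + N) = endo_of_matrix M + endo_of_matrix N"
  by (rule endo_eqI)
    (simp add: plus_endo.rep_eq plus_blinfun.rep_eq blinfun_apply_endo_of_matrix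
      matrix_vector_mult_add_rdistrib)

lemma endo_of_matrix_scaleR: "endo_of_matrix (r *\<^sub>R M) = r *\<^sub>R endo_of_matrix M"
  by (rule endo_eqI)
    (simp add: scaleR_endo.rep_eq scaleR_blinfun.rep_eq blinfun_apply_endo_of_matrix
      bounded_bilinear.scaleR_left[OF bounded_bilinear_matrix_vector_mult])

lemma bounded_linear_endo_of_matrix: "bounded_linear endo_of_matrix"
  unfolding linear_conv_bounded_linear[symmetric]
  by (rule linearI) (simp_all add: endo_of_matrix_add endo_of_matrix_scaleR)

lemma bounded_linear_matrix_of_endo: "bounded_linear matrix_of_endo"
proof (rule bounded_linear_intro)
  fix a b :: "(complex^'n) endo" and r :: real
  show "matrix_of_endo (a + b) = matrix_of_endo a + matrix_of_endo b"
    by (simp add: matrix_of_endo_def matrix_def plus_endo.rep_eq plus_blinfun.rep_eq vec_eq_iff)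
  show "matrix_of_endo (r *\<^sub>R a) = r *\<^sub>R matrix_of_endo a"
    by (simp add: matrix_of_endo_def matrix_def scaleR_endo.rep_eq scaleR_blinfun.rep_eq vec_eq_iff)
  define ones :: "complex^'n^'n" where "ones = (\<chi> i j. 1)"
  have "norm (matrix_of_endo a $ i $ j) \<le> norm ((norm a *\<^sub>R ones) $ i $ j)" for i j
  proof -
    have "norm (matrix_of_endo a $ i $ j) \<le> norm (blinfun_apply (endo_rep a) (axis j 1))"
      unfolding matrix_of_endo_def matrix_def by (simp add: Finite_Cartesian_Product.norm_nth_le)
    also have "\<dots> \<le> norm a"
      using norm_blinfun[of "endo_rep a" "axis j 1"] by (simp add: norm_endo.rep_eq)
    finally show ?thesis by (simp add: ones_def)
  qed
  then have "norm (matrix_of_endo a) \<le> norm (norm a *\<^sub>R ones)"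
    by (intro norm_le_componentwise_cart)
  then show "norm (matrix_of_endo a) \<le> norm a * norm ones" by simp
qed

lemma endo_of_matrix_exp_term:
  "endo_of_matrix ((1 / fact k) *\<^sub>R mpow M k) = endo_of_matrix M ^ k /\<^sub>R fact k"
  by (simp add: endo_of_matrix_scaleR endo_of_matrix_mpow divide_inverse)

lemma mexp_sums: "(\<lambda>k. (1 / fact k) *\<^sub>R mpow M k) sums mexp M"
proof -
  have "(\<lambda>k. endo_of_matrix M ^ k /\<^sub>R fact k) sums exp (endo_of_matrix M)"
    unfolding exp_def by (rule summable_sums[OF summable_exp_generic])
  from bounded_linear.sums[OF bounded_linear_matrix_of_endo this]
  have "(\<lambda>k. (1 / fact k) *\<^sub>R mpow M k) sums matrix_of_endo (exp (endo_of_matrix M))"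
    by (simp flip: endo_of_matrix_exp_term)
  then show ?thesis
    unfolding mexp_def by (rule summable_sums[OF sums_summable])
qed

lemma endo_of_matrix_mexp: "endo_of_matrix (mexp M) = exp (endo_of_matrix M)"
proof -
  from bounded_linear.sums[OF bounded_linear_endo_of_matrix mexp_sums]
  have "(\<lambda>k. endo_of_matrix M ^ k /\<^sub>R fact k) sums endo_of_matrix (mexp M)"
    by (simp only: endo_of_matrix_exp_term)
  then show ?thesis
    unfolding exp_def by (simp add: sums_iff)
qed

lemma mexp_zero: "mexp 0 = (mat 1 :: complex^'n^'n)"
proof -
  have "endo_of_matrix (0 :: complex^'n^'n) = 0"
    using endo_of_matrix_scaleR[of 0] by simp
  then have "endo_of_matrix (mexp 0) = endo_of_matrix (mat 1 :: complex^'n^'n)"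
    by (simp add: endo_of_matrix_mexp endo_of_matrix_one)
  then show ?thesis by (simp add: endo_of_matrix_inject)
qed

lemma endo_of_matrix_commute:
  "X ** Y = Y ** X \<Longrightarrow> endo_of_matrix X * endo_of_matrix Y = endo_of_matrix Y * endo_of_matrix X"
  by (metis endo_of_matrix_mult)

lemma mexp_add:
  assumes "X ** Y = Y ** X"
  shows "mexp (X + Y) = mexp X ** mexp Y"
proof -
  have "endo_of_matrix (mexp (X + Y)) = endo_of_matrix (mexp X ** mexp Y)"
    using exp_add_commuting[OF endo_of_matrix_commute[OF assms]]
    by (simp add: endo_of_matrix_mexp endo_of_matrix_add endo_of_matrix_mult)
  then show ?thesis by (simp add: endo_of_matrix_inject)
qed

lemma mexp_matrix_mult_commute:
  assumes "X ** Y = Y ** X"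
  shows "mexp X ** Y = Y ** mexp X"
proof -
  have "endo_of_matrix (mexp X ** Y) = endo_of_matrix (Y ** mexp X)"
    using exp_mult_commute[OF endo_of_matrix_commute[OF assms]]
    by (simp add: endo_of_matrix_mexp endo_of_matrix_mult)
  then show ?thesis by (simp add: endo_of_matrix_inject)
qed

lemma mexp_has_vector_derivative_commuting:
  fixes P :: "real \<Rightarrow> complex^'n^'n"
  assumes "(P has_vector_derivative P') (at t)" and "\<And>s. P s ** P t = P t ** P s"
  shows "((\<lambda>s. mexp (P s)) has_vector_derivative mexp (P t) ** P') (at t)"
proof -
  have "((\<lambda>s. endo_of_matrix (P s)) has_vector_derivative endo_of_matrix P') (at t)"
    by (rule bounded_linear.has_vector_derivative[OF bounded_linear_endo_of_matrix assms(1)])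
  then have "((\<lambda>s. exp (endo_of_matrix (P s))) has_vector_derivative
               exp (endo_of_matrix (P t)) * endo_of_matrix P') (at t)"
    by (rule has_vector_derivative_exp_commuting) (intro endo_of_matrix_commute assms(2))
  then have "((\<lambda>s. endo_of_matrix (mexp (P s))) has_vector_derivative
               endo_of_matrix (mexp (P t) ** P')) (at t)"
    by (simp only: endo_of_matrix_mexp endo_of_matrix_mult)
  from bounded_linear.has_vector_derivative[OF bounded_linear_matrix_of_endo this] show ?thesis
    by simp
qed

lemma integrable_on_interval_if_continuous:
  "continuous_on UNIV (F :: real \<Rightarrow> 'b::euclidean_space) \<Longrightarrow> F integrable_on {a..b}"
  by (rule integrable_continuous_real) (rule continuous_on_subset, auto)

lemma oint_eq_integral_diff:
  fixes F :: "real \<Rightarrow> 'b::euclidean_space"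
  assumes "continuous_on UNIV F" "c \<le> a" "c \<le> b"
  shows "oint a b F = integral {c..b} F - integral {c..a} F"
proof (cases "a \<le> b")
  case True
  then have "integral {c..a} F + integral {a..b} F = integral {c..b} F"
    using assms by (intro Henstock_Kurzweil_Integration.integral_combine integrable_on_interval_if_continuous)
  then show ?thesis using True by (simp add: oint_def algebra_simps)
next
  case False
  then have "integral {c..b} F + integral {b..a} F = integral {c..a} F"
    using assms by (intro Henstock_Kurzweil_Integration.integral_combine integrable_on_interval_if_continuous) auto
  then show ?thesis using False by (simp add: oint_def algebra_simps)
qed

lemma oint_self [simp]: "oint a a F = 0"
  by (simp add: oint_def)

lemma oint_add:
  fixes F :: "real \<Rightarrow> 'b::euclidean_space"
  assumes "continuous_on UNIV F"
  shows "oint a b F + oint b c F = oint a c F"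
  using oint_eq_integral_diff[OF assms, of "min a (min b c)"] by simp

lemma oint_swap:
  fixes F :: "real \<Rightarrow> 'b::euclidean_space"
  assumes "continuous_on UNIV F"
  shows "oint b a F = - oint a b F"
  using oint_add[OF assms, of b a b] by (simp add: eq_neg_iff_add_eq_0)

lemma oint_has_vector_derivative:
  fixes F :: "real \<Rightarrow> 'b::euclidean_space"
  assumes "continuous_on UNIV F"
  shows "((\<lambda>s. oint a s F) has_vector_derivative F t) (at t)"
proof -
  define c where "c = min a t - 1"
  have "((\<lambda>s. integral {c..s} F) has_vector_derivative F t) (at t within {c..t + 1})"
    by (rule integral_has_vector_derivative)
      (auto intro: continuous_on_subset[OF assms] simp: c_def)
  moreover have "t \<in> interior {c..t + 1}" by (simp add: c_def)
  ultimately have "((\<lambda>s. integral {c..s} F) has_vector_derivative F t) (at t)"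
    by (metis at_within_interior)
  from has_vector_derivative_diff[OF this has_vector_derivative_const[of "integral {c..a} F"]]
  have "((\<lambda>s. integral {c..s} F - integral {c..a} F) has_vector_derivative F t) (at t)"
    by simp
  then show ?thesis
  proof (rule has_vector_derivative_transform_within_open)
    show "integral {c..s} F - integral {c..a} F = oint a s F" if "s \<in> {c<..}" for s
      using that oint_eq_integral_diff[OF assms, of c a s] by (simp add: c_def)
  qed (auto simp: c_def)
qed

lemma oint_bounded_linear:
  fixes F :: "real \<Rightarrow> 'b::euclidean_space" and L :: "'b \<Rightarrow> 'c::euclidean_space"
  assumes "continuous_on UNIV F" "bounded_linear L"
  shows "oint a b (\<lambda>u. L (F u)) = L (oint a b F)"
  using integral_linear[OF integrable_on_interval_if_continuous[OF assms(1)] assms(2)]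
    linear_simps(4)[OF assms(2)]
  by (simp add: oint_def o_def)

section \<open>Linear systems with pairwise commuting coefficient matrices\<close>

lemma continuous_on_matrix_vector_mult:
  fixes M :: "'a::topological_space \<Rightarrow> 'b::{euclidean_space, real_algebra_1}^'n^'m"
  shows "continuous_on S M \<Longrightarrow> continuous_on S v \<Longrightarrow> continuous_on S (\<lambda>t. M t *v v t)"
  by (rule bounded_bilinear.continuous_on[OF bounded_bilinear_matrix_vector_mult])

context
  fixes H :: "real \<Rightarrow> complex^'n^'n"
  assumes continuous_H: "continuous_on UNIV H"
    and H_commute: "\<And>s t. H s ** H t = H t ** H s"
begin

lemma oint_commute:
  assumes "\<And>u. H u ** N = N ** H u"
  shows "oint a b H ** N = N ** oint a b H"
proof -
  have "oint a b H ** N = oint a b (\<lambda>u. H u ** N)"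
    by (rule oint_bounded_linear[OF continuous_H
          bounded_bilinear.bounded_linear_left[OF bounded_bilinear_matrix_matrix_mult], symmetric])
  also have "\<dots> = oint a b (\<lambda>u. N ** H u)"
    by (simp add: assms)
  also have "\<dots> = N ** oint a b H"
    by (rule oint_bounded_linear[OF continuous_H
          bounded_bilinear.bounded_linear_right[OF bounded_bilinear_matrix_matrix_mult]])
  finally show ?thesis .
qed

lemma oint_commute_H: "oint a b H ** H t = H t ** oint a b H"
  by (rule oint_commute) (rule H_commute)

lemma oint_commute_oint: "oint a b H ** oint c d H = oint c d H ** oint a b H"
  by (rule oint_commute) (rule oint_commute_H[symmetric])

lemma mexp_oint_mult: "mexp (oint a b H) ** mexp (oint b c H) = mexp (oint a c H)"
  by (simp add: oint_add[OF continuous_H] oint_commute_oint flip: mexp_add)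

lemma mexp_oint_has_vector_derivative:
  "((\<lambda>s. mexp (oint a s H)) has_vector_derivative mexp (oint a t H) ** H t) (at t)"
  by (intro mexp_has_vector_derivative_commuting oint_has_vector_derivative continuous_H
      oint_commute_oint)

lemma mexp_oint_lower_has_vector_derivative:
  "((\<lambda>s. mexp (oint s a H)) has_vector_derivative mexp (oint t a H) ** - H t) (at t)"
  unfolding oint_swap[OF continuous_H, of _ a]
  by (intro mexp_has_vector_derivative_commuting has_vector_derivative_minus
      oint_has_vector_derivative continuous_H)
    (simp add: oint_commute_oint bounded_bilinear.minus_left bounded_bilinear.minus_right
      bounded_bilinear_matrix_matrix_mult)

lemma continuous_on_mexp_oint: "continuous_on UNIV (\<lambda>s. mexp (oint a s H))"
  using mexp_oint_has_vector_derivative has_vector_derivative_continuous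
  by (blast intro: continuous_at_imp_continuous_on)

lemma variation_of_constants_eq:
  assumes "continuous_on UNIV f"
  shows "mexp (oint t 0 H) *v y0 + oint 0 t (\<lambda>v. mexp (oint t v H) *v f v)
       = mexp (oint t 0 H) *v (y0 + oint 0 t (\<lambda>v. mexp (oint 0 v H) *v f v))"
proof -
  have "oint 0 t (\<lambda>v. mexp (oint t v H) *v f v)
      = oint 0 t (\<lambda>v. mexp (oint t 0 H) *v (mexp (oint 0 v H) *v f v))"
    by (simp add: matrix_vector_mul_assoc mexp_oint_mult)
  also have "\<dots> = mexp (oint t 0 H) *v oint 0 t (\<lambda>v. mexp (oint 0 v H) *v f v)"
    using continuous_on_matrix_vector_mult[OF continuous_on_mexp_oint assms]
      bounded_bilinear.bounded_linear_right[OF bounded_bilinear_matrix_vector_mult]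
    by (rule oint_bounded_linear)
  finally show ?thesis
    by (simp add: matrix_vector_right_distrib)
qed

lemma commuting_linear_ode_solution:
  fixes f :: "real \<Rightarrow> complex^'n" and y0 :: "complex^'n"
  assumes f: "continuous_on UNIV f"
  defines "Y \<equiv> \<lambda>t. mexp (oint t 0 H) *v y0 + oint 0 t (\<lambda>v. mexp (oint t v H) *v f v)"
  shows "(Y has_vector_derivative f t - H t *v Y t) (at t)" and "Y 0 = y0"
proof -
  define E where "E s = mexp (oint s 0 H)" for s
  define G where "G s = oint 0 s (\<lambda>v. mexp (oint 0 v H) *v f v)" for s
  have Y: "Y = (\<lambda>s. E s *v (y0 + G s))"
    by (simp add: Y_def E_def G_def variation_of_constants_eq[OF f])
  have "(G has_vector_derivative mexp (oint 0 t H) *v f t) (at t)"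
    unfolding G_def[abs_def]
    by (intro oint_has_vector_derivative continuous_on_matrix_vector_mult continuous_on_mexp_oint f)
  then have "((\<lambda>s. y0 + G s) has_vector_derivative mexp (oint 0 t H) *v f t) (at t)"
    using has_vector_derivative_add[OF has_vector_derivative_const] by fastforce
  then have "(Y has_vector_derivative
               E t *v (mexp (oint 0 t H) *v f t) + (E t ** - H t) *v (y0 + G t)) (at t)"
    unfolding Y E_def
    by (rule bounded_bilinear.has_vector_derivative[OF bounded_bilinear_matrix_vector_mult
          mexp_oint_lower_has_vector_derivative])
  moreover have "E t *v (mexp (oint 0 t H) *v f t) = f t"
    by (simp add: E_def matrix_vector_mul_assoc mexp_oint_mult mexp_zero)
  moreover have "(E t ** - H t) *v (y0 + G t) = - (H t *v Y t)"
  proof -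
    have "E t ** - H t = - (H t ** E t)"
      unfolding E_def
      by (simp add: bounded_bilinear.minus_right[OF bounded_bilinear_matrix_matrix_mult]
          mexp_matrix_mult_commute oint_commute_H)
    then show ?thesis
      by (simp add: Y bounded_bilinear.minus_left[OF bounded_bilinear_matrix_vector_mult]
          matrix_vector_mul_assoc)
  qed
  ultimately show "(Y has_vector_derivative f t - H t *v Y t) (at t)" by simp
  show "Y 0 = y0" by (simp add: Y_def mexp_zero)
qed

lemma commuting_linear_ode_unique:
  assumes f: "continuous_on UNIV f"
    and y': "\<And>t. (y has_vector_derivative y' t) (at t)"
    and ode: "\<And>t. y' t + H t *v y t = f t"
  shows "y t = mexp (oint t 0 H) *v y 0 + oint 0 t (\<lambda>v. mexp (oint t v H) *v f v)"
proof -
  define G where "G s = oint 0 s (\<lambda>v. mexp (oint 0 v H) *v f v)" for s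
  define w where "w s = mexp (oint 0 s H) *v y s - G s" for s
  have "(w has_vector_derivative 0) (at s)" for s
  proof -
    have "(w has_vector_derivative
            mexp (oint 0 s H) *v y' s + (mexp (oint 0 s H) ** H s) *v y s
              - mexp (oint 0 s H) *v f s) (at s)"
      unfolding w_def[abs_def] G_def
      by (intro has_vector_derivative_diff y' mexp_oint_has_vector_derivative
          bounded_bilinear.has_vector_derivative[OF bounded_bilinear_matrix_vector_mult]
          oint_has_vector_derivative continuous_on_matrix_vector_mult continuous_on_mexp_oint f)
    moreover have "mexp (oint 0 s H) *v y' s + (mexp (oint 0 s H) ** H s) *v y s
                   = mexp (oint 0 s H) *v f s"
      using ode[of s] by (simp flip: matrix_vector_mul_assoc matrix_vector_right_distrib)
    ultimately show ?thesis by simp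
  qed
  then have "w t = w 0"
    using has_vector_derivative_zero_constant[of UNIV w] by (metis convex_UNIV UNIV_I)
  then have "mexp (oint 0 t H) *v y t = y 0 + G t"
    by (simp add: w_def G_def mexp_zero diff_eq_eq add.commute)
  then have "mexp (oint t 0 H) *v (mexp (oint 0 t H) *v y t) = mexp (oint t 0 H) *v (y 0 + G t)"
    by simp
  then show ?thesis
    by (simp add: G_def matrix_vector_mul_assoc mexp_oint_mult mexp_zero variation_of_constants_eq[OF f])
qed

end

theorem mainTheorem8:
  fixes A :: "complex^'q^'q"
    and h :: vgpoly
    and f :: "real \<Rightarrow> complex^'q"
    and y0 :: "complex^'q"
  assumes h_smooth: "\<And>a n. smooth_fun (\<lambda>t. fps_nth (h t a) n)"
    and f_cont: "continuous_on UNIV f"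
  defines "Y \<equiv> (\<lambda>t. mexp (oint t 0 (\<lambda>u. vgp_eval h u A)) *v y0
                 + oint 0 t (\<lambda>v. mexp (oint t v (\<lambda>u. vgp_eval h u A)) *v f v))"
  shows "(\<exists>Y'. (\<forall>t. (Y has_vector_derivative Y' t) (at t)) \<and> continuous_on UNIV Y' \<and>
            (\<forall>t. Y' t + vgp_eval h t A *v Y t = f t) \<and> Y 0 = y0)
       \<and> (\<forall>y y'. (\<forall>t. (y has_vector_derivative y' t) (at t)) \<and> continuous_on UNIV y' \<and>
            (\<forall>t. y' t + vgp_eval h t A *v y t = f t) \<and> y 0 = y0 \<longrightarrow> y = Y)"
proof -
  have H_cont: "continuous_on UNIV (\<lambda>t. vgp_eval h t A)"
    by (intro continuous_on_vgp_eval smooth_fun_imp_continuous h_smooth)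
  have H_commute: "vgp_eval h s A ** vgp_eval h t A = vgp_eval h t A ** vgp_eval h s A" for s t
    unfolding vgp_eval_def by (rule gp_eval_commute)
  have Y_deriv: "(Y has_vector_derivative f t - vgp_eval h t A *v Y t) (at t)" for t
    unfolding Y_def by (rule commuting_linear_ode_solution(1)[OF H_cont H_commute f_cont])
  have Y_0: "Y 0 = y0"
    unfolding Y_def by (rule commuting_linear_ode_solution(2)[OF H_cont H_commute f_cont])
  have "continuous_on UNIV Y"
    using Y_deriv has_vector_derivative_continuous continuous_at_imp_continuous_on by blast
  then have "continuous_on UNIV (\<lambda>t. f t - vgp_eval h t A *v Y t)"
    by (intro continuous_on_diff f_cont continuous_on_matrix_vector_mult H_cont)
  with Y_deriv Y_0 have "\<exists>Y'. (\<forall>t. (Y has_vector_derivative Y' t) (at t)) \<and> continuous_on UNIV Y' \<and>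
                        (\<forall>t. Y' t + vgp_eval h t A *v Y t = f t) \<and> Y 0 = y0"
    by (intro exI[of _ "\<lambda>t. f t - vgp_eval h t A *v Y t"]) auto
  moreover have "y = Y"
    if "\<forall>t. (y has_vector_derivative y' t) (at t)" "\<forall>t. y' t + vgp_eval h t A *v y t = f t"
      "y 0 = y0" for y y'
    using commuting_linear_ode_unique[OF H_cont H_commute f_cont] that by (auto simp: Y_def)
  ultimately show ?thesis by blast
qed

end
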